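(* Let $\mathbf A$ be a residuated semigroup satisfying $xx=x$ for all $x$. The following are equivalent: (1) $(x/x)y=y(x/x)$ for all $x,y$; (2) $x\backslash x=x/x$ for all $x$; (3) $\mathbf A$ is commutative ($xy=yx$ for all $x,y$). Moreover, each of these conditions implies the conditions (H1), (H2), (H3): for all $x,y$, if $x/x=y/y$ then $(xy)/(xy)=x/x$, $(x/y)/(x/y)=x/x$ and $(x\backslash y)/(x\backslash y)=x/x$.
   Context: A residuated semigroup is a structure $\langle A,\le,\cdot,\backslash,/\rangle$ where $\langle A,\le\rangle$ is a poset, $\langle A,\cdot\rangle$ is a semigroup (we write $xy$ for $x\cdot y$), and for all $x,y,z$: $xy\le z\iff x\le z/y\iff y\le x\backslash z$. *)

theory Defs
  imports Main
begin

text \<open>A residuated semigroup on the carrier type 'a, given by an order le,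
  multiplication m, left residual ld (x\z) and right residual rd (z/y).\<close>
definition residuated_semigroup ::
  "('a \<Rightarrow> 'a \<Rightarrow> bool) \<Rightarrow> ('a \<Rightarrow> 'a \<Rightarrow> 'a) \<Rightarrow> ('a \<Rightarrow> 'a \<Rightarrow> 'a) \<Rightarrow> ('a \<Rightarrow> 'a \<Rightarrow> 'a) \<Rightarrow> bool"
  where "residuated_semigroup le m ld rd \<longleftrightarrow>
     (\<forall>x. le x x) \<and>
     (\<forall>x y. le x y \<and> le y x \<longrightarrow> x = y) \<and>
     (\<forall>x y z. le x y \<and> le y z \<longrightarrow> le x z) \<and>
     (\<forall>x y z. m (m x y) z = m x (m y z)) \<and>
     (\<forall>x y z. (le (m x y) z \<longleftrightarrow> le x (rd z y)) \<and> (le (m x y) z \<longleftrightarrow> le y (ld x z)))"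

end

theory Submission
  imports Defs
begin

text \<open>The proof works with the characterisation of \<open>x/x\<close> as the largest \<open>a\<close>
  with \<open>a x \<le> x\<close>; idempotency gives \<open>x \<le> x/x\<close> and \<open>(x/x) x = x\<close>.
  If \<open>x\<backslash>x = x/x\<close> for all \<open>x\<close>, then with \<open>z = xy\<close> both \<open>x\<close> and \<open>y\<close> lie below
  \<open>z/z = z\<backslash>z\<close>, so \<open>yx = y z x \<le> z x \<le> z = xy\<close>, whence commutativity. Finally, centrality of
  every \<open>x/x\<close> forces \<open>x (x/x) = x\<close>, i.e. \<open>x/x \<le> x\<backslash>x\<close>; the reverse inequality
  is obtained by applying this to \<open>w = (x\<backslash>x) x\<close>, which satisfies \<open>xw = x\<close> and \<open>wx = w\<close>.\<close>

locale residuated_sg =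
  fixes le :: "'a \<Rightarrow> 'a \<Rightarrow> bool" and m ld rd :: "'a \<Rightarrow> 'a \<Rightarrow> 'a"
  assumes residuated: "residuated_semigroup le m ld rd"
begin

lemma le_refl: "le x x"
  using residuated unfolding residuated_semigroup_def by blast

lemma le_antisym: "le x y \<Longrightarrow> le y x \<Longrightarrow> x = y"
  using residuated unfolding residuated_semigroup_def by blast

lemma le_trans [trans]: "le x y \<Longrightarrow> le y z \<Longrightarrow> le x z"
  using residuated unfolding residuated_semigroup_def by blast

lemma mult_assoc: "m (m x y) z = m x (m y z)"
  using residuated unfolding residuated_semigroup_def by blast

lemma mult_le_iff_le_rd: "le (m x y) z \<longleftrightarrow> le x (rd z y)"
  using residuated unfolding residuated_semigroup_def by blast

lemma mult_le_iff_le_ld: "le (m x y) z \<longleftrightarrow> le y (ld x z)"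
  using residuated unfolding residuated_semigroup_def by blast

lemma rd_mult_le: "le (m (rd x y) y) x"
  using mult_le_iff_le_rd le_refl by blast

lemma mult_ld_le: "le (m y (ld y x)) x"
  using mult_le_iff_le_ld le_refl by blast

lemma mult_mono_left: "le a b \<Longrightarrow> le (m a c) (m b c)"
  using mult_le_iff_le_rd le_refl le_trans by meson

lemma mult_mono_right: "le a b \<Longrightarrow> le (m c a) (m c b)"
  using mult_le_iff_le_ld le_refl le_trans by meson

lemma ld_eq_rd_if_commutative:
  assumes "\<forall>x y. m x y = m y x"
  shows "ld x z = rd z x"
  using assms mult_le_iff_le_rd mult_le_iff_le_ld le_refl le_antisym by metis

end

locale idempotent_residuated_sg = residuated_sg +
  assumes mult_idem: "\<And>x. m x x = x"
begin

lemma le_rd_self: "le x (rd x x)"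
  using mult_le_iff_le_rd mult_idem le_refl by metis

lemma le_ld_self: "le x (ld x x)"
  using mult_le_iff_le_ld mult_idem le_refl by metis

lemma mult_right_absorb: "m (m x y) y = m x y"
  by (simp add: mult_assoc mult_idem)

lemma le_rd_self_if_mult_le_rd_self:
  assumes "le (m a x) (rd x x)"
  shows "le a (rd x x)"
proof -
  have "le (m (m a x) x) x"
    using assms mult_le_iff_le_rd by blast
  then show ?thesis
    by (simp add: mult_right_absorb mult_le_iff_le_rd)
qed

lemma mult_rd_self_eq_if_central:
  assumes "\<forall>y. m (rd x x) y = m y (rd x x)"
  shows "m x (rd x x) = x"
proof (rule le_antisym)
  show "le (m x (rd x x)) x"
    using assms rd_mult_le by metis
  show "le x (m x (rd x x))"
    using mult_mono_right[OF le_rd_self] mult_idem by metis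
qed

lemma ld_self_le_rd_self_if_central:
  assumes central: "\<forall>x y. m (rd x x) y = m y (rd x x)"
  shows "le (ld x x) (rd x x)"
proof -
  define w where "w = m (ld x x) x"
  have x_le_w: "le x w"
    unfolding w_def using mult_mono_left[OF le_ld_self] mult_idem by metis
  have xw: "m x w = x"
  proof (rule le_antisym)
    show "le (m x w) x"
      unfolding w_def using mult_mono_left[OF mult_ld_le, of x x x]
      by (simp add: mult_assoc mult_idem)
    show "le x (m x w)"
      using mult_mono_right[OF x_le_w] mult_idem by metis
  qed
  have x_rdw: "m x (rd w w) = m x (m (rd w w) w)"
    using xw central mult_assoc by metis
  have "w = m w x"
    unfolding w_def by (simp add: mult_assoc mult_idem)
  also have "le \<dots> (m (rd w w) x)"
    by (rule mult_mono_left[OF le_rd_self])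
  also have "\<dots> = m x (rd w w)"
    using central by metis
  also have "le \<dots> (m x w)"
    unfolding x_rdw by (rule mult_mono_right[OF rd_mult_le])
  finally have "le (m (ld x x) x) x"
    using xw w_def by simp
  then show ?thesis
    using mult_le_iff_le_rd by blast
qed

lemma ld_self_eq_rd_self_if_central:
  assumes central: "\<forall>x y. m (rd x x) y = m y (rd x x)"
  shows "ld x x = rd x x"
proof (rule le_antisym)
  show "le (ld x x) (rd x x)"
    using central by (rule ld_self_le_rd_self_if_central)
  show "le (rd x x) (ld x x)"
    using mult_rd_self_eq_if_central[of x] central le_refl mult_le_iff_le_ld by metis
qed

lemma mult_le_commuted_if_ld_self_eq_rd_self:
  assumes ld_eq_rd: "\<forall>z. ld z z = rd z z"
  shows "le (m y x) (m x y)"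
proof -
  define z where "z = m x y"
  have "le (m z y) z"
    unfolding z_def by (simp add: mult_right_absorb le_refl)
  then have zy: "le (m y z) z"
    using ld_eq_rd mult_le_iff_le_ld mult_le_iff_le_rd by metis
  have "le (m x z) z"
    unfolding z_def by (simp add: mult_assoc[symmetric] mult_idem le_refl)
  then have zx: "le (m z x) z"
    using ld_eq_rd mult_le_iff_le_ld mult_le_iff_le_rd by metis
  have "m y x = m (m y z) x"
    unfolding z_def by (metis mult_assoc mult_idem)
  also have "le \<dots> (m z x)"
    by (rule mult_mono_left[OF zy])
  also have "le \<dots> z"
    by (rule zx)
  finally show ?thesis
    unfolding z_def .
qed

lemma commutative_if_ld_self_eq_rd_self:
  assumes "\<forall>z. ld z z = rd z z"
  shows "m x y = m y x"
  using assms mult_le_commuted_if_ld_self_eq_rd_self le_antisym by blast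

lemma rd_self_of_mult:
  assumes same: "rd x x = rd y y"
  shows "rd (m x y) (m x y) = rd x x"
proof (rule le_antisym)
  have "le (m (m (rd x x) x) y) (m x y)"
    by (rule mult_mono_left[OF rd_mult_le])
  then show "le (rd x x) (rd (m x y) (m x y))"
    using mult_le_iff_le_rd mult_assoc by metis
  have "le (m (m (rd (m x y) (m x y)) x) y) (m x y)"
    using rd_mult_le mult_assoc by metis
  also have "le \<dots> y"
    using mult_le_iff_le_rd le_rd_self same by metis
  finally have "le (m (rd (m x y) (m x y)) x) (rd x x)"
    using same mult_le_iff_le_rd by metis
  then show "le (rd (m x y) (m x y)) (rd x x)"
    by (rule le_rd_self_if_mult_le_rd_self)
qed

context
  assumes commutative: "\<forall>x y. m x y = m y x"
begin

lemma rd_self_of_rd: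
  assumes same: "rd x x = rd y y"
  shows "rd (rd x y) (rd x y) = rd x x"
proof (rule le_antisym)
  define r where "r = rd x y"
  have "le (m (rd x x) (m r y)) (m (rd x x) x)"
    unfolding r_def by (rule mult_mono_right[OF rd_mult_le])
  also have "le \<dots> x"
    by (rule rd_mult_le)
  finally have "le (m (rd x x) r) r"
    unfolding r_def using mult_le_iff_le_rd mult_assoc by metis
  then show "le (rd x x) (rd r r)"
    using mult_le_iff_le_rd by blast
  have x_le_r: "le x r"
    unfolding r_def using le_rd_self same commutative mult_le_iff_le_rd by metis
  have "m r y = m (m r y) y"
    by (simp add: mult_right_absorb)
  also have "le \<dots> (m x y)"
    unfolding r_def by (rule mult_mono_left[OF rd_mult_le])
  also have "le \<dots> y"
    using mult_le_iff_le_rd le_rd_self same by metis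
  finally have r_le: "le r (rd x x)"
    using same mult_le_iff_le_rd by metis
  have "le (m (rd r r) x) (m (rd r r) r)"
    by (rule mult_mono_right[OF x_le_r])
  also have "le \<dots> r"
    by (rule rd_mult_le)
  also have "le \<dots> (rd x x)"
    by (rule r_le)
  finally show "le (rd r r) (rd x x)"
    by (rule le_rd_self_if_mult_le_rd_self)
qed

lemma rd_self_of_ld:
  assumes "rd x x = rd y y"
  shows "rd (ld x y) (ld x y) = rd x x"
  using rd_self_of_rd[of y x] assms ld_eq_rd_if_commutative[OF commutative] by simp

end

end

theorem proposition7p1:
  fixes le :: "'a \<Rightarrow> 'a \<Rightarrow> bool" and m ld rd :: "'a \<Rightarrow> 'a \<Rightarrow> 'a"
  assumes "residuated_semigroup le m ld rd"
    and "\<forall>x. m x x = x"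
  shows "((\<forall>x y. m (rd x x) y = m y (rd x x)) \<longleftrightarrow> (\<forall>x. ld x x = rd x x))
       \<and> ((\<forall>x. ld x x = rd x x) \<longleftrightarrow> (\<forall>x y. m x y = m y x))
       \<and> ((\<forall>x y. m x y = m y x) \<longrightarrow>
            (\<forall>x y. rd x x = rd y y \<longrightarrow>
               rd (m x y) (m x y) = rd x x
             \<and> rd (rd x y) (rd x y) = rd x x
             \<and> rd (ld x y) (ld x y) = rd x x))"
proof -
  interpret idempotent_residuated_sg le m ld rd
    using assms by unfold_locales auto
  have "(\<forall>x y. m (rd x x) y = m y (rd x x)) \<Longrightarrow> (\<forall>x. ld x x = rd x x)"
    using ld_self_eq_rd_self_if_central by blast
  moreover have "(\<forall>x. ld x x = rd x x) \<Longrightarrow> (\<forall>x y. m x y = m y x)"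
    using commutative_if_ld_self_eq_rd_self by blast
  moreover have "(\<forall>x y. m x y = m y x) \<Longrightarrow> (\<forall>x. ld x x = rd x x)"
    using ld_eq_rd_if_commutative by blast
  moreover have "(\<forall>x y. m x y = m y x) \<Longrightarrow> rd x x = rd y y \<Longrightarrow>
      rd (m x y) (m x y) = rd x x \<and> rd (rd x y) (rd x y) = rd x x
      \<and> rd (ld x y) (ld x y) = rd x x" for x y
    using rd_self_of_mult rd_self_of_rd rd_self_of_ld by blast
  ultimately show ?thesis
    by blast
qed

end
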